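(* If $\lambda<1-\frac1d$, then the unique fixed point $x^\star$ is given by $x^\star_{0,0}=1-\lambda-\frac1d$, $x^\star_{0,1}=\frac1d$, $x^\star_{1,1}=\lambda$ and $x^\star_{i,j}=0$ for all other $(i,j)$; in particular $x^\star_{0,0}>0$.
   Context: Fix $\lambda\in(0,1)$, an integer $d\ge2$ and an integer $I>1$. $\mathcal S=\{x=(x_{i,j})_{0\le i\le j\le I}: x_{i,j}\ge0,\ \sum_{i=0}^I\sum_{j=i}^I x_{i,j}=1\}$; $x_{i,\cdot}=\sum_{j=i}^I x_{i,j}$, $x_{\cdot,j}=\sum_{i=0}^j x_{i,j}$. For $0\le j\le I$: $\mathcal R_j(x)=\max\{0,\lambda(1-d\sum_{i=0}^j(j+1-i)x_{i,\cdot})\}\,\mathbf 1\{\sum_{i=0}^j x_{\cdot,i}=0\}$, $\mathcal G_j(x)=\lambda d\,\mathbf 1\{\sum_{i=0}^j x_{\cdot,i}=0,\ d\sum_{i=0}^j(j+1-i)x_{i,\cdot}\le1\}\sum_{i=0}^j x_{i,\cdot}$. Write $\rho_k^{a,b}(x)=\mathcal R_k(x)\frac{x_{a,b}}{x_{\cdot,b}}\mathbf 1\{x_{\cdot,b}>0\}$ (equal to $0$ when $x_{\cdot,b}=0$). The drift $b(x)$ is: $b_{0,0}=\lambda d(x_{0,\cdot}-x_{0,0})-\lambda+\mathcal R_0(x)$; for $i<j$: $b_{i,j}=x_{i+1,j}-\mathbf 1\{i>0\}x_{i,j}-\lambda d x_{i,j}-\rho_{j-1}^{i,j}+\mathbf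 1\{i>0\}\rho_{j-2}^{i-1,j-1}+\mathbf 1\{j=I,i>0\}\rho_{I-1}^{i-1,I}$; $b_{1,1}=-x_{1,1}+\lambda d(x_{1,\cdot}-x_{1,1})+\lambda-\mathcal R_0(x)-\rho_0^{1,1}-\mathcal G_1(x)$; for $2\le i\le I-1$: $b_{i,i}=-x_{i,i}+\lambda d(x_{i,\cdot}-x_{i,i})-\rho_{i-1}^{i,i}+\rho_{i-2}^{i-1,i-1}+\mathcal G_{i-1}(x)-\mathcal G_i(x)$; $b_{I,I}=-x_{I,I}+\rho_{I-2}^{I-1,I-1}+\mathcal G_{I-1}(x)+\rho_{I-1}^{I-1,I}$. A fluid solution is an absolutely continuous $x:\mathbb R_+\to\mathcal S$ with $\dot x_{i,j}(t)=b_{i,j}(x(t))$ for a.e. $t$ and all $i\le j$. A fixed point is a fluid solution with $b(x(t))=0$ for all $t\ge0$ (hence constant, identified with a point of $\mathcal S$); it is unique. *)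

theory Defs
  imports Complex_Main
begin

text \<open>A state x is a function nat => nat => real; only the entries x i j with
  0 <= i <= j <= I are meaningful. Parameters: lam (lambda), d, I.\<close>

definition row :: "nat \<Rightarrow> (nat \<Rightarrow> nat \<Rightarrow> real) \<Rightarrow> nat \<Rightarrow> real" where
  "row I x i = (\<Sum>j=i..I. x i j)"

definition col :: "(nat \<Rightarrow> nat \<Rightarrow> real) \<Rightarrow> nat \<Rightarrow> real" where
  "col x j = (\<Sum>i=0..j. x i j)"

definition inS :: "nat \<Rightarrow> (nat \<Rightarrow> nat \<Rightarrow> real) \<Rightarrow> bool" where
  "inS I x \<longleftrightarrow> (\<forall>i j. i \<le> j \<and> j \<le> I \<longrightarrow> 0 \<le> x i j)
     \<and> (\<Sum>i=0..I. \<Sum>j=i..I. x i j) = 1"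

definition Rf :: "real \<Rightarrow> nat \<Rightarrow> nat \<Rightarrow> (nat \<Rightarrow> nat \<Rightarrow> real) \<Rightarrow> nat \<Rightarrow> real" where
  "Rf lam d I x j =
     (if (\<Sum>i=0..j. col x i) = 0
      then max 0 (lam * (1 - real d * (\<Sum>i=0..j. real (j + 1 - i) * row I x i)))
      else 0)"

definition Gf :: "real \<Rightarrow> nat \<Rightarrow> nat \<Rightarrow> (nat \<Rightarrow> nat \<Rightarrow> real) \<Rightarrow> nat \<Rightarrow> real" where
  "Gf lam d I x j =
     lam * real d *
     (if (\<Sum>i=0..j. col x i) = 0 \<and> real d * (\<Sum>i=0..j. real (j + 1 - i) * row I x i) \<le> 1
      then (\<Sum>i=0..j. row I x i) else 0)"

definition rho :: "real \<Rightarrow> nat \<Rightarrow> nat \<Rightarrow> (nat \<Rightarrow> nat \<Rightarrow> real) \<Rightarrow> nat \<Rightarrow> nat \<Rightarrow> nat \<Rightarrow> real" where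
  "rho lam d I x k a b = (if col x b > 0 then Rf lam d I x k * x a b / col x b else 0)"

definition drift :: "real \<Rightarrow> nat \<Rightarrow> nat \<Rightarrow> (nat \<Rightarrow> nat \<Rightarrow> real) \<Rightarrow> nat \<Rightarrow> nat \<Rightarrow> real" where
  "drift lam d I x i j =
    (if i = 0 \<and> j = 0 then
       lam * real d * (row I x 0 - x 0 0) - lam + Rf lam d I x 0
     else if i < j then
       x (i + 1) j - (if 0 < i then x i j else 0) - lam * real d * x i j
       - rho lam d I x (j - 1) i j
       + (if 0 < i then rho lam d I x (j - 2) (i - 1) (j - 1) else 0)
       + (if j = I \<and> 0 < i then rho lam d I x (I - 1) (i - 1) I else 0)
     else if i = 1 \<and> j = 1 then
       - x 1 1 + lam * real d * (row I x 1 - x 1 1) + lam - Rf lam d I x 0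
       - rho lam d I x 0 1 1 - Gf lam d I x 1
     else if i = j \<and> 2 \<le> i \<and> i \<le> I - 1 then
       - x i i + lam * real d * (row I x i - x i i) - rho lam d I x (i - 1) i i
       + rho lam d I x (i - 2) (i - 1) (i - 1) + Gf lam d I x (i - 1) - Gf lam d I x i
     else if i = I \<and> j = I then
       - x I I + rho lam d I x (I - 2) (I - 1) (I - 1) + Gf lam d I x (I - 1)
       + rho lam d I x (I - 1) (I - 1) I
     else 0)"

text \<open>A fixed point: a (constant) fluid solution with zero drift, identified with a
  point of S at which every drift coordinate (0 <= i <= j <= I) vanishes.\<close>
definition fixed_point :: "real \<Rightarrow> nat \<Rightarrow> nat \<Rightarrow> (nat \<Rightarrow> nat \<Rightarrow> real) \<Rightarrow> bool" where
  "fixed_point lam d I x \<longleftrightarrow> inS I x \<and> (\<forall>i j. i \<le> j \<and> j \<le> I \<longrightarrow> drift lam d I x i j = 0)"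

definition xstar :: "real \<Rightarrow> nat \<Rightarrow> nat \<Rightarrow> nat \<Rightarrow> real" where
  "xstar lam d i j =
    (if i = 0 \<and> j = 0 then 1 - lam - 1 / real d
     else if i = 0 \<and> j = 1 then 1 / real d
     else if i = 1 \<and> j = 1 then lam
     else 0)"

end

theory Submission
  imports Defs
begin

text \<open>Summing the drift along a row turns the fixed point equations into a balance law:
  the mass of row i+1 equals the flow out of row i plus a source term (the arrivals
  \<lambda> - R_0 for row 1, G_i for row i+1). Each unit of flow or of G is paid for by a
  decrease of the rates R_j along the columns, so at a fixed point the rows above row 0
  carry mass at most \<lambda>. If x_00 = 0, the drift at (0,0) vanishes only if
  d \<cdot> row 0 \<le> 1, which then forces \<lambda> \<ge> 1 - 1/d. Hence x_00 > 0, which switches off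
  all rates R, G and \<rho>, and the balance law and the drift at (1,1), (0,j) determine the
  fixed point.\<close>

text \<open>Rate of the transition (a,b) \<rightarrow> (a+1, min (b+1) I) in the drift. The corner (0,0)
  has no such transition; there b - 1 truncates to 0 and the value is junk.\<close>
definition flow :: "real \<Rightarrow> nat \<Rightarrow> nat \<Rightarrow> (nat \<Rightarrow> nat \<Rightarrow> real) \<Rightarrow> nat \<Rightarrow> nat \<Rightarrow> real" where
  "flow lam d I x a b = rho lam d I x (b - 1) a b"

definition row_flow :: "real \<Rightarrow> nat \<Rightarrow> nat \<Rightarrow> (nat \<Rightarrow> nat \<Rightarrow> real) \<Rightarrow> nat \<Rightarrow> real" where
  "row_flow lam d I x a = (\<Sum>b=a..I. if 0 < b then flow lam d I x a b else 0)"

definition source :: "real \<Rightarrow> nat \<Rightarrow> nat \<Rightarrow> (nat \<Rightarrow> nat \<Rightarrow> real) \<Rightarrow> nat \<Rightarrow> real" where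
  "source lam d I x i = (if i = 0 then lam - Rf lam d I x 0 else Gf lam d I x i)"

lemma drift_0_0: "drift lam d I x 0 0 = lam * real d * (row I x 0 - x 0 0) - source lam d I x 0"
  by (simp add: drift_def source_def)

lemma drift_row_0:
  "0 < j \<Longrightarrow> drift lam d I x 0 j = x 1 j - lam * real d * x 0 j - flow lam d I x 0 j"
  by (simp add: drift_def flow_def)

lemma drift_above_diag:
  assumes "0 < i" "i < j"
  shows "drift lam d I x i j = x (Suc i) j - x i j - lam * real d * x i j - flow lam d I x i j
     + flow lam d I x (i - 1) (j - 1) + (if j = I then flow lam d I x (i - 1) I else 0)"
  using assms by (simp add: drift_def flow_def numeral_2_eq_2)

lemma drift_diag:
  assumes "0 < i" "i < I"
  shows "drift lam d I x i i = - x i i + lam * real d * (row I x i - x i i) - flow lam d I x i i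
     + (if 1 < i then flow lam d I x (i - 1) (i - 1) else 0)
     + source lam d I x (i - 1) - source lam d I x i"
proof (cases "i = 1")
  case True
  then show ?thesis using assms by (simp add: drift_def flow_def source_def)
next
  case False
  then have "2 \<le> i" "i \<le> I - 1" "i - 1 - 1 = i - 2" using assms by auto
  then show ?thesis using assms False by (simp add: drift_def flow_def source_def)
qed

lemma row_split: "i \<le> I \<Longrightarrow> row I x i = x i i + (\<Sum>j=Suc i..I. x i j)"
  unfolding row_def by (simp add: sum.atLeast_Suc_atMost)

lemma row_flow_split:
  "a \<le> I \<Longrightarrow> row_flow lam d I x a
     = (if 0 < a then flow lam d I x a a else 0) + (\<Sum>b=Suc a..I. flow lam d I x a b)"
  unfolding row_flow_def by (simp add: sum.atLeast_Suc_atMost)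

lemma sum_shift_pred:
  fixes f :: "nat \<Rightarrow> 'a::comm_monoid_add"
  assumes "i < I"
  shows "(\<Sum>j=Suc i..I. f (j - 1)) + f I = (\<Sum>j=i..I. f j)"
proof -
  obtain n where I: "I = Suc n" using assms by (cases I) auto
  have "(\<Sum>j=Suc i..Suc n. f (j - 1)) = (\<Sum>j=i..n. f (Suc j - 1))"
    by (rule sum.shift_bounds_cl_Suc_ivl)
  then show ?thesis using assms I by simp
qed

lemma row_drift_sum_0:
  "(\<Sum>j=0..I. drift lam d I x 0 j) = row I x 1 - row_flow lam d I x 0 - source lam d I x 0"
proof -
  have "(\<Sum>j=Suc 0..I. drift lam d I x 0 j)
      = (\<Sum>j=Suc 0..I. x 1 j - lam * real d * x 0 j - flow lam d I x 0 j)"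
    by (rule sum.cong) (auto simp: drift_row_0)
  also have "\<dots> = row I x 1 - lam * real d * (\<Sum>j=Suc 0..I. x 0 j) - (\<Sum>j=Suc 0..I. flow lam d I x 0 j)"
    by (simp add: row_def sum_subtractf sum_distrib_left)
  finally show ?thesis
    using row_split[of 0 I x] row_flow_split[of 0 I lam d x]
    by (simp add: sum.atLeast_Suc_atMost[of 0] drift_0_0 algebra_simps)
qed

lemma row_drift_sum:
  assumes "0 < i" "i < I"
  shows "(\<Sum>j=i..I. drift lam d I x i j) = row I x (Suc i) - row I x i
     - row_flow lam d I x i + row_flow lam d I x (i - 1) + source lam d I x (i - 1) - source lam d I x i"
proof -
  let ?F = "flow lam d I x"
  have "(\<Sum>j=Suc i..I. drift lam d I x i j) = (\<Sum>j=Suc i..I. x (Suc i) j - x i j - lam * real d * x i j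
      - ?F i j + ?F (i - 1) (j - 1) + (if j = I then ?F (i - 1) I else 0))"
    by (rule sum.cong) (use assms in \<open>auto simp: drift_above_diag\<close>)
  also have "\<dots> = row I x (Suc i) - (1 + lam * real d) * (\<Sum>j=Suc i..I. x i j)
      - (\<Sum>j=Suc i..I. ?F i j) + ((\<Sum>j=Suc i..I. ?F (i - 1) (j - 1)) + ?F (i - 1) I)"
    using assms by (simp add: row_def sum.distrib sum_subtractf sum_distrib_left algebra_simps)
  finally have "(\<Sum>j=Suc i..I. drift lam d I x i j) = row I x (Suc i) - (1 + lam * real d) * (row I x i - x i i)
      - (row_flow lam d I x i - ?F i i) + (row_flow lam d I x (i - 1) - (if 1 < i then ?F (i - 1) (i - 1) else 0))"
    using assms row_split[of i I x] row_flow_split[of i I lam d x] row_flow_split[of "i - 1" I lam d x]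
      sum_shift_pred[of i I "?F (i - 1)"] by simp
  then show ?thesis
    using assms drift_diag[of i I lam d x] by (simp add: sum.atLeast_Suc_atMost algebra_simps)
qed

lemma fixed_pointD:
  assumes "fixed_point lam d I x"
  shows "inS I x" "i \<le> j \<Longrightarrow> j \<le> I \<Longrightarrow> drift lam d I x i j = 0"
  using assms by (simp_all add: fixed_point_def)

lemma fixed_point_row_balance:
  assumes "fixed_point lam d I x" "i < I"
  shows "row I x (Suc i) = row_flow lam d I x i + source lam d I x i"
  using assms(2)
proof (induction i)
  case 0
  have "(\<Sum>j=0..I. drift lam d I x 0 j) = 0"
    using fixed_pointD(2)[OF assms(1)] by (intro sum.neutral) auto
  then show ?case by (simp add: row_drift_sum_0)
next
  case (Suc i)
  have "(\<Sum>j=Suc i..I. drift lam d I x (Suc i) j) = 0"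
    using fixed_pointD(2)[OF assms(1)] by (intro sum.neutral) auto
  then show ?case using Suc by (simp add: row_drift_sum)
qed

lemma inS_nonneg: "inS I x \<Longrightarrow> i \<le> j \<Longrightarrow> j \<le> I \<Longrightarrow> 0 \<le> x i j"
  unfolding inS_def by blast

lemma row_nonneg: "inS I x \<Longrightarrow> 0 \<le> row I x i"
  unfolding row_def by (rule sum_nonneg) (auto intro: inS_nonneg)

lemma col_nonneg: "inS I x \<Longrightarrow> j \<le> I \<Longrightarrow> 0 \<le> col x j"
  unfolding col_def by (rule sum_nonneg) (auto intro: inS_nonneg)

lemma sum_rows_eq_1: "inS I x \<Longrightarrow> (\<Sum>i=0..I. row I x i) = 1"
  unfolding inS_def row_def by simp

lemma Gf_nonneg: "0 \<le> lam \<Longrightarrow> inS I x \<Longrightarrow> 0 \<le> Gf lam d I x n"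
  unfolding Gf_def by (auto intro!: mult_nonneg_nonneg sum_nonneg row_nonneg)

lemma Rf_nonneg: "0 \<le> Rf lam d I x n"
  unfolding Rf_def by simp

lemma flow_nonneg: "inS I x \<Longrightarrow> a \<le> b \<Longrightarrow> b \<le> I \<Longrightarrow> 0 \<le> flow lam d I x a b"
  unfolding flow_def rho_def
  by (auto intro!: divide_nonneg_pos mult_nonneg_nonneg inS_nonneg Rf_nonneg)

lemma sum_flow_col:
  "(\<Sum>a=0..b. flow lam d I x a b) = (if 0 < col x b then Rf lam d I x (b - 1) else 0)"
proof (cases "0 < col x b")
  case True
  then have "(\<Sum>a=0..b. flow lam d I x a b) = Rf lam d I x (b - 1) * (\<Sum>a=0..b. x a b) / col x b"
    unfolding flow_def rho_def by (simp add: sum_divide_distrib sum_distrib_left)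
  then show ?thesis using True by (simp add: col_def)
qed (simp add: flow_def rho_def)

lemma sum_triangle_swap:
  fixes f :: "nat \<Rightarrow> nat \<Rightarrow> 'a::comm_monoid_add"
  shows "(\<Sum>a=0..n. \<Sum>b=a..n. f a b) = (\<Sum>b=0..n. \<Sum>a=0..b. f a b)"
  by (induction n) (auto simp: sum.distrib)

lemma sum_row_flow_le:
  assumes "inS I x"
  shows "(\<Sum>a<I. row_flow lam d I x a) \<le> (\<Sum>b=1..I. if 0 < col x b then Rf lam d I x (b - 1) else 0)"
proof -
  let ?f = "\<lambda>a b. if 0 < b then flow lam d I x a b else 0"
  have "(\<Sum>a<I. row_flow lam d I x a) \<le> (\<Sum>a=0..I. \<Sum>b=a..I. ?f a b)"
    unfolding row_flow_def
    by (rule sum_mono2) (auto intro!: sum_nonneg flow_nonneg[OF assms])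
  also have "\<dots> = (\<Sum>b=0..I. \<Sum>a=0..b. ?f a b)"
    by (rule sum_triangle_swap)
  also have "\<dots> = (\<Sum>b=0..I. if 0 < b then (if 0 < col x b then Rf lam d I x (b - 1) else 0) else 0)"
    by (intro sum.cong refl) (simp add: sum_flow_col)
  also have "\<dots> = (\<Sum>b=1..I. if 0 < col x b then Rf lam d I x (b - 1) else 0)"
    by (simp add: sum.atLeast_Suc_atMost[of 0])
  finally show ?thesis .
qed

lemma sum_weighted_Suc:
  fixes r :: "nat \<Rightarrow> real"
  shows "(\<Sum>i=0..Suc n. real (Suc n + 1 - i) * r i)
    = (\<Sum>i=0..n. real (n + 1 - i) * r i) + (\<Sum>i=0..Suc n. r i)"
proof -
  have "(\<Sum>i=0..Suc n. real (Suc n + 1 - i) * r i) = (\<Sum>i=0..Suc n. real (n + 1 - i) * r i + r i)"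
    by (intro sum.cong refl) (auto simp: Suc_diff_le algebra_simps)
  then show ?thesis by (simp add: sum.distrib)
qed

lemma Rf_Suc_budget:
  assumes S: "inS I x" and lam: "0 < lam" and n: "Suc n \<le> I"
  shows "Gf lam d I x (Suc n) + (if 0 < col x (Suc n) then Rf lam d I x n else 0)
     + Rf lam d I x (Suc n) \<le> Rf lam d I x n"
proof (cases "(\<Sum>i=0..Suc n. col x i) = 0")
  case False
  then show ?thesis by (simp add: Gf_def Rf_def[of _ _ _ _ "Suc n"] Rf_nonneg)
next
  case True
  have "\<forall>i\<in>{0..Suc n}. col x i = 0"
    using True n by (subst sum_nonneg_eq_0_iff[symmetric]) (auto intro: col_nonneg[OF S])
  then have cols: "(\<Sum>i=0..n. col x i) = 0" "col x (Suc n) = 0" by auto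
  define W where "W = real d * (\<Sum>i=0..n. real (n + 1 - i) * row I x i)"
  define T where "T = real d * (\<Sum>i=0..Suc n. row I x i)"
  have T: "0 \<le> T" unfolding T_def using row_nonneg[OF S] by (simp add: sum_nonneg)
  have "real d * (\<Sum>i=0..Suc n. real (Suc n + 1 - i) * row I x i) = W + T"
    unfolding W_def T_def sum_weighted_Suc by (simp add: distrib_left)
  then have R: "Rf lam d I x n = max 0 (lam * (1 - W))"
    "Rf lam d I x (Suc n) = max 0 (lam * (1 - (W + T)))"
    "Gf lam d I x (Suc n) = (if W + T \<le> 1 then lam * T else 0)"
    using True cols unfolding Rf_def Gf_def W_def T_def by simp_all
  show ?thesis
  proof (cases "W + T \<le> 1")
    case True
    then have "0 \<le> lam * (1 - (W + T))" "0 \<le> lam * (1 - W)" using T lam by simp_all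
    then show ?thesis using R cols True by (simp add: algebra_simps)
  next
    case False
    then have "lam * (1 - (W + T)) \<le> 0" using lam by (intro mult_nonneg_nonpos) auto
    then show ?thesis using R cols False by simp
  qed
qed

lemma Rf_budget:
  assumes "inS I x" "0 < lam" "n \<le> I"
  shows "(\<Sum>m=1..n. Gf lam d I x m) + (\<Sum>b=1..n. if 0 < col x b then Rf lam d I x (b - 1) else 0)
     + Rf lam d I x n \<le> Rf lam d I x 0"
  using assms(3)
proof (induction n)
  case (Suc n)
  then show ?case
    using Rf_Suc_budget[OF assms(1,2) Suc.prems, of d] by (cases "0 < col x (Suc n)") simp_all
qed simp

lemma fixed_point_sum_upper_rows:
  assumes "fixed_point lam d I x"
  shows "(\<Sum>i=1..I. row I x i) = (\<Sum>i<I. row_flow lam d I x i) + (\<Sum>i<I. source lam d I x i)"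
proof -
  have "(\<Sum>i=1..I. row I x i) = (\<Sum>i<I. row I x (Suc i))"
    by (simp add: sum.atLeast1_atMost_eq)
  also have "\<dots> = (\<Sum>i<I. row_flow lam d I x i + source lam d I x i)"
    using fixed_point_row_balance[OF assms] by simp
  finally show ?thesis by (simp add: sum.distrib)
qed

lemma fixed_point_upper_rows_le:
  assumes fp: "fixed_point lam d I x" and lam: "0 < lam" and I: "0 < I"
  shows "(\<Sum>i=1..I. row I x i) \<le> lam"
proof -
  have S: "inS I x" using fixed_pointD(1)[OF fp] .
  obtain n where n: "I = Suc n" using I by (cases I) auto
  have "(\<Sum>i<I. source lam d I x i) = lam - Rf lam d I x 0 + (\<Sum>i<n. Gf lam d I x (Suc i))"
    unfolding n sum.lessThan_Suc_shift by (simp add: source_def)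
  also have "(\<Sum>i<n. Gf lam d I x (Suc i)) \<le> (\<Sum>m=1..I. Gf lam d I x m)"
  proof -
    have "(\<Sum>m=1..I. Gf lam d I x m) = (\<Sum>i<Suc n. Gf lam d I x (Suc i))"
      unfolding n by (simp add: sum.atLeast1_atMost_eq)
    then show ?thesis using Gf_nonneg[OF less_imp_le[OF lam] S] by simp
  qed
  finally have "(\<Sum>i<I. source lam d I x i) \<le> lam - Rf lam d I x 0 + (\<Sum>m=1..I. Gf lam d I x m)"
    by simp
  then show ?thesis
    using fixed_point_sum_upper_rows[OF fp] sum_row_flow_le[OF S, of lam d]
      Rf_budget[OF S lam order_refl, of d] Rf_nonneg[of lam d I x I] by linarith
qed

lemma fixed_point_corner_pos:
  assumes fp: "fixed_point lam d I x" and lam: "0 < lam" and d: "0 < d" and I: "0 < I"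
    and lam_lt: "lam < 1 - 1 / real d"
  shows "0 < x 0 0"
proof (rule ccontr)
  assume "\<not> 0 < x 0 0"
  moreover have S: "inS I x" using fixed_pointD(1)[OF fp] .
  ultimately have x00: "x 0 0 = 0" using inS_nonneg[OF S, of 0 0] by simp
  then have R0: "Rf lam d I x 0 = max 0 (lam * (1 - real d * row I x 0))"
    by (simp add: Rf_def col_def)
  have "drift lam d I x 0 0 = 0" using fixed_pointD(2)[OF fp, of 0 0] by simp
  then have drift0: "lam * real d * row I x 0 - lam + Rf lam d I x 0 = 0"
    using x00 by (simp add: drift_def)
  have "real d * row I x 0 \<le> 1"
  proof (rule ccontr)
    assume "\<not> real d * row I x 0 \<le> 1"
    moreover from this have "Rf lam d I x 0 = 0" using R0 lam by (simp add: mult_pos_neg)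
    ultimately show False using drift0 lam by (simp add: algebra_simps)
  qed
  then have "row I x 0 \<le> 1 / real d" using d by (simp add: field_simps)
  moreover have "row I x 0 + (\<Sum>i=1..I. row I x i) = 1"
    using sum_rows_eq_1[OF S] by (simp add: sum.atLeast_Suc_atMost)
  ultimately show False using fixed_point_upper_rows_le[OF fp lam I] lam_lt by linarith
qed

lemma tail_sum_eq_0_entry:
  assumes "inS I x" "(\<Sum>j=k..I. x i j) = 0" "i \<le> k" "k \<le> j" "j \<le> I"
  shows "x i j = 0"
proof -
  have "\<forall>j\<in>{k..I}. x i j = 0"
    using assms by (subst sum_nonneg_eq_0_iff[symmetric]) (auto intro: inS_nonneg)
  then show ?thesis using assms by simp
qed

lemma rates_vanish_if_corner_pos:
  assumes "\<And>i. i \<le> n \<Longrightarrow> 0 \<le> col x i" "0 < x 0 0"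
  shows "Rf lam d I x n = 0" "Gf lam d I x n = 0"
proof -
  have "0 \<le> (\<Sum>i=Suc 0..n. col x i)" using assms(1) by (auto intro!: sum_nonneg)
  then have "(\<Sum>i=0..n. col x i) \<noteq> 0"
    using assms(2) by (simp add: sum.atLeast_Suc_atMost[of 0] col_def)
  then show "Rf lam d I x n = 0" "Gf lam d I x n = 0" by (simp_all add: Rf_def Gf_def)
qed

context
  fixes lam :: real and d I :: nat and x :: "nat \<Rightarrow> nat \<Rightarrow> real"
  assumes fp: "fixed_point lam d I x" and lam: "0 < lam" and d: "0 < d" and I: "1 < I"
    and corner: "0 < x 0 0"
begin

lemma corner_pos_Rf: "n \<le> I \<Longrightarrow> Rf lam d I x n = 0"
  and corner_pos_Gf: "n \<le> I \<Longrightarrow> Gf lam d I x n = 0"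
  by (auto intro!: rates_vanish_if_corner_pos corner col_nonneg[OF fixed_pointD(1)[OF fp]])

lemma corner_pos_flow: "b \<le> I \<Longrightarrow> flow lam d I x a b = 0"
  by (simp add: flow_def rho_def corner_pos_Rf)

lemma corner_pos_row: "0 < i \<Longrightarrow> i \<le> I \<Longrightarrow> row I x i = (if i = 1 then lam else 0)"
proof -
  assume "0 < i" "i \<le> I"
  then obtain k where k: "i = Suc k" "k < I" by (cases i) auto
  have "row_flow lam d I x k = 0"
    unfolding row_flow_def by (intro sum.neutral) (simp add: corner_pos_flow)
  then show ?thesis
    using fixed_point_row_balance[OF fp k(2)] k
    by (simp add: source_def corner_pos_Rf corner_pos_Gf)
qed

lemma corner_pos_row_1: "x 1 1 = lam" "2 \<le> j \<Longrightarrow> j \<le> I \<Longrightarrow> x 1 j = 0"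
proof -
  have "drift lam d I x 1 1 = 0" using fixed_pointD(2)[OF fp, of 1 1] I by simp
  then have "(1 + lam * real d) * (lam - x 1 1) = 0"
    using drift_diag[of 1 I lam d x] I
    by (simp add: corner_pos_row corner_pos_flow source_def corner_pos_Rf corner_pos_Gf algebra_simps)
  moreover have "0 < 1 + lam * real d" using lam d by (simp add: add_pos_pos)
  ultimately show x11: "x 1 1 = lam" by simp
  have "(\<Sum>j=2..I. x 1 j) = 0"
    using row_split[of 1 I x] corner_pos_row[of 1] I x11 by (simp add: numeral_2_eq_2)
  then show "2 \<le> j \<Longrightarrow> j \<le> I \<Longrightarrow> x 1 j = 0"
    by (rule tail_sum_eq_0_entry[OF fixed_pointD(1)[OF fp]]) simp_all
qed

lemma corner_pos_row_0:
  "x 0 1 = 1 / real d" "2 \<le> j \<Longrightarrow> j \<le> I \<Longrightarrow> x 0 j = 0" "x 0 0 = 1 - lam - 1 / real d"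
proof -
  have drift_0: "x 1 j - lam * real d * x 0 j = 0" if "0 < j" "j \<le> I" for j
    using fixed_pointD(2)[OF fp, of 0 j] drift_row_0[of j lam d I x] that by (simp add: corner_pos_flow)
  have "lam * (real d * x 0 1 - 1) = 0"
    using drift_0[of 1] I corner_pos_row_1(1) by (simp add: algebra_simps)
  then show x01: "x 0 1 = 1 / real d" using lam d by (simp add: field_simps)
  show x0j: "x 0 j = 0" if "2 \<le> j" "j \<le> I" for j
    using drift_0[of j] that lam d corner_pos_row_1(2)[OF that] by simp
  have "(\<Sum>j=Suc 1..I. x 0 j) = 0" using x0j by (intro sum.neutral) simp
  then have "row I x 0 = x 0 0 + x 0 1"
    using I by (simp add: row_def sum.atLeast_Suc_atMost[of 0] sum.atLeast_Suc_atMost[of "Suc 0"])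
  moreover have "(\<Sum>i=1..I. row I x i) = lam"
    using I by (simp add: sum.atLeast_Suc_atMost[of 1] corner_pos_row)
  then have "row I x 0 = 1 - lam"
    using sum_rows_eq_1[OF fixed_pointD(1)[OF fp]] by (simp add: sum.atLeast_Suc_atMost[of 0])
  ultimately show "x 0 0 = 1 - lam - 1 / real d" using x01 by simp
qed

lemma corner_pos_eq_xstar: "i \<le> j \<Longrightarrow> j \<le> I \<Longrightarrow> x i j = xstar lam d i j"
proof -
  assume ij: "i \<le> j" "j \<le> I"
  consider "i = 0" "j = 0" | "i = 0" "j = 1" | "i = 1" "j = 1" | "i \<le> 1" "2 \<le> j" | "2 \<le> i"
    using ij by linarith
  then show ?thesis
  proof cases
    case 4
    then show ?thesis using ij corner_pos_row_0(2) corner_pos_row_1(2) by (auto simp: xstar_def le_Suc_eq)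
  next
    case 5
    then have "(\<Sum>j=i..I. x i j) = 0" using ij corner_pos_row[of i] by (simp add: row_def)
    then show ?thesis using 5 ij tail_sum_eq_0_entry[OF fixed_pointD(1)[OF fp]] by (simp add: xstar_def)
  qed (use corner_pos_row_0 corner_pos_row_1 in \<open>simp_all add: xstar_def\<close>)
qed

end

lemma xstar_row:
  assumes "0 < I"
  shows "row I (xstar lam d) i = (if i = 0 then 1 - lam else if i = 1 then lam else 0)"
proof -
  have "row I (xstar lam d) i = (\<Sum>j=i..1. xstar lam d i j)"
    unfolding row_def using assms by (intro sum.mono_neutral_right) (auto simp: xstar_def)
  then show ?thesis by (cases "i \<le> 1") (auto simp: xstar_def le_Suc_eq)
qed

lemma xstar_fixed_point:
  assumes lam: "0 < lam" and d: "0 < d" and I: "1 < I" and lam_lt: "lam < 1 - 1 / real d"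
  shows "fixed_point lam d I (xstar lam d)"
proof -
  let ?x = "xstar lam d"
  have nonneg: "0 \<le> ?x i j" for i j using lam_lt lam by (simp add: xstar_def)
  have "(\<Sum>i=0..I. row I ?x i) = row I ?x 0 + row I ?x 1"
    using I by (simp add: xstar_row sum.atLeast_Suc_atMost[of 0] sum.atLeast_Suc_atMost[of 1])
  then have state: "inS I ?x"
    using I nonneg by (simp add: inS_def xstar_row flip: row_def)
  have corner: "0 < ?x 0 0" using lam_lt by (simp add: xstar_def)
  have "Rf lam d I ?x n = 0" "Gf lam d I ?x n = 0" for n
    using corner nonneg by (auto intro!: rates_vanish_if_corner_pos simp: col_def sum_nonneg)
  then have "drift lam d I ?x i j = 0" if "i \<le> j" "j \<le> I" for i j
    using that I d by (simp add: drift_def rho_def xstar_row xstar_def)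
  then show ?thesis using state by (simp add: fixed_point_def)
qed

theorem mainTheorem6:
  fixes lam :: real and d I :: nat
  assumes "0 < lam" and "lam < 1" and "2 \<le> d" and "1 < I"
    and "lam < 1 - 1 / real d"
  shows "fixed_point lam d I (xstar lam d)
    \<and> (\<forall>x. fixed_point lam d I x \<longrightarrow> (\<forall>i j. i \<le> j \<and> j \<le> I \<longrightarrow> x i j = xstar lam d i j))
    \<and> 0 < xstar lam d 0 0"
proof -
  have d: "0 < d" using assms(3) by simp
  have unique: "x i j = xstar lam d i j" if fp: "fixed_point lam d I x" and "i \<le> j" "j \<le> I" for x i j
  proof -
    have "0 < x 0 0" using fixed_point_corner_pos[OF fp assms(1) d _ assms(5)] assms(4) by simp
    then show ?thesis using corner_pos_eq_xstar[OF fp assms(1) d assms(4)] that by simp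
  qed
  moreover have "0 < xstar lam d 0 0" using assms(5) by (simp add: xstar_def)
  ultimately show ?thesis using xstar_fixed_point[OF assms(1) d assms(4,5)] by blast
qed

end
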